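(* For integers $0\le m\le n$, $$\sum_{j=0}^{n-m}(-2)^{-j}\binom{n-m+j}{j}\binom{2n}{n+m+j}=2^{m-n}\binom{n}{m}\frac{\binom{2n}{n}}{\binom{2m}{m}}.$$ *)

theory Defs
  imports Complex_Main
begin

end

theory Submission
  imports Defs
begin

text \<open>Put \<open>k = n - m\<close>. By the symmetry \<open>C(2n, n+m+j) = C(2n, k-j)\<close> the left-hand side is
  \<open>A(k) = \<Sum>j\<le>k. (-1/2)^j C(k+j, j) C(2n, k-j)\<close>. An explicit telescoping certificate
  shows \<open>(k+1) A(k+1) = (2n-1-2k) A(k)\<close>; the right-hand side satisfies the same recurrence
  (through \<open>(q+1) C(2q+2, q+1) = 2 (2q+1) C(2q, q)\<close>) and both equal \<open>1\<close> at \<open>k = 0\<close>.\<close>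

lemma Suc_times_binomial_Suc: "Suc k * (n choose Suc k) = (n - k) * (n choose k)"
  by (metis binomial_absorption binomial_absorb_comp)

lemma Suc_times_binomial_add_Suc: "Suc k * (Suc k + j choose j) = (Suc k + j) * (k + j choose j)"
  using Suc_times_binomial[of k "k + j"]
    binomial_symmetric[of j "Suc k + j"] binomial_symmetric[of j "k + j"]
  by simp

lemma binomial_double_Suc: "(2 * Suc k choose Suc k) = 2 * (Suc (2 * k) choose Suc k)"
proof -
  have "(Suc (2 * k) choose k) = (Suc (2 * k) choose Suc k)"
    using binomial_symmetric[of k "Suc (2 * k)"] by simp
  then show ?thesis
    using binomial_Suc_Suc[of "Suc (2 * k)" k] by simp
qed

lemma central_binomial_Suc: "Suc q * (2 * Suc q choose Suc q) = 2 * (2 * q + 1) * (2 * q choose q)"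
proof -
  have "Suc q * (2 * Suc q choose Suc q) = 2 * (Suc q * (Suc (2 * q) choose Suc q))"
    by (simp only: binomial_double_Suc mult.left_commute)
  also have "\<dots> = 2 * (Suc (2 * q) * (2 * q choose q))"
    by (simp only: Suc_times_binomial)
  finally show ?thesis
    by simp
qed

definition alt_binomial_sum :: "nat \<Rightarrow> nat \<Rightarrow> real" where
  "alt_binomial_sum n k = (\<Sum>j=0..k. (-1/2)^j * real (k + j choose j) * real (2 * n choose (k - j)))"

text \<open>Zeilberger certificate of the first-order recurrence in \<open>k\<close> satisfied by
  \<open>alt_binomial_sum n k\<close>.\<close>

definition alt_binomial_certificate :: "nat \<Rightarrow> nat \<Rightarrow> nat \<Rightarrow> real" where
  "alt_binomial_certificate n k j
    = (-1/2)^j * real (2 * j) * real (k + j choose j) * real (2 * n choose (Suc k - j))"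

lemma alt_binomial_summand_telescopes:
  assumes "j \<le> k" "k \<le> 2 * n"
  shows "real (Suc k) * ((-1/2)^j * real (Suc k + j choose j) * real (2 * n choose (Suc k - j)))
     - (2 * real n - 1 - 2 * real k) * ((-1/2)^j * real (k + j choose j) * real (2 * n choose (k - j)))
   = alt_binomial_certificate n k j - alt_binomial_certificate n k (Suc j)"
proof -
  define c where "c = real (k + j choose j)"
  define a where "a = real (2 * n choose (k - j))"
  define b where "b = real (2 * n choose (Suc k - j))"
  have "real (Suc k) * real (Suc k + j choose j) = real (Suc k + j) * c"
    unfolding c_def by (metis Suc_times_binomial_add_Suc of_nat_mult)
  then have first: "real (Suc k) * ((-1/2)^j * real (Suc k + j choose j) * b)
      = (-1/2)^j * b * (real (Suc k + j) * c)"
    by (metis mult.commute mult.left_commute)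
  have absorb: "real (Suc j) * real (k + Suc j choose Suc j) = real (k + Suc j) * c"
    unfolding c_def using Suc_times_binomial[of j "k + j"] by (metis add_Suc_right of_nat_mult)
  have "(-1/2)^Suc j * real (2 * Suc j) * real (k + Suc j choose Suc j) * a
      = - ((-1/2)^j * a * (real (Suc j) * real (k + Suc j choose Suc j)))"
    by (simp add: algebra_simps del: binomial_Suc_Suc)
  also have "\<dots> = - ((-1/2)^j * a * (real (k + Suc j) * c))"
    by (simp only: absorb)
  finally have last: "(-1/2)^Suc j * real (2 * Suc j) * real (k + Suc j choose Suc j) * a
      = - ((-1/2)^j * a * (real (k + Suc j) * c))" .
  have "real (Suc (k - j)) * b = real (2 * n - (k - j)) * a"
    unfolding a_def b_def Suc_diff_le[OF assms(1)]
    by (metis Suc_times_binomial_Suc of_nat_mult)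
  then have absorption: "(real k - real j + 1) * b = (2 * real n - real k + real j) * a"
    using assms by (simp add: of_nat_diff algebra_simps)
  have "real (Suc k) * ((-1/2)^j * real (Suc k + j choose j) * b)
          - (2 * real n - 1 - 2 * real k) * ((-1/2)^j * c * a)
        - ((-1/2)^j * real (2 * j) * c * b
           - (-1/2)^Suc j * real (2 * Suc j) * real (k + Suc j choose Suc j) * a)
      = (-1/2)^j * c * ((real k - real j + 1) * b - (2 * real n - real k + real j) * a)"
    unfolding first last by (simp add: algebra_simps)
  also have "\<dots> = 0"
    using absorption by simp
  finally show ?thesis
    unfolding alt_binomial_certificate_def a_def b_def c_def by simp
qed

lemma alt_binomial_sum_Suc:
  assumes "k \<le> 2 * n"
  shows "real (Suc k) * alt_binomial_sum n (Suc k)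
    = (2 * real n - 1 - 2 * real k) * alt_binomial_sum n k"
proof -
  define f where "f j = (-1/2)^j * real (Suc k + j choose j) * real (2 * n choose (Suc k - j))"
    for j :: nat
  let ?T = "alt_binomial_certificate n k"
  have "real (Suc k) * (\<Sum>j=0..k. f j) - (2 * real n - 1 - 2 * real k) * alt_binomial_sum n k
      = (\<Sum>j=0..k. ?T j - ?T (Suc j))"
    unfolding alt_binomial_sum_def sum_distrib_left sum_subtractf[symmetric]
    by (rule sum.cong[OF refl], unfold f_def, rule alt_binomial_summand_telescopes) (use assms in auto)
  also have "\<dots> = - (\<Sum>j=0..k. ?T (Suc j) - ?T j)"
    by (simp add: sum_subtractf)
  also have "\<dots> = - ?T (Suc k)"
    by (subst sum_Suc_diff) (simp_all add: alt_binomial_certificate_def)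
  also have "\<dots> = - real (Suc k) * f (Suc k)"
  proof -
    have "k + Suc k = Suc (2 * k)" "Suc k + Suc k = 2 * Suc k"
      by simp_all
    then show ?thesis
      unfolding alt_binomial_certificate_def f_def by (simp only: binomial_double_Suc) (simp add: algebra_simps)
  qed
  finally have telescoped: "real (Suc k) * (\<Sum>j=0..k. f j) - (2 * real n - 1 - 2 * real k) * alt_binomial_sum n k
      = - real (Suc k) * f (Suc k)" .
  have "alt_binomial_sum n (Suc k) = (\<Sum>j=0..k. f j) + f (Suc k)"
    unfolding alt_binomial_sum_def f_def by simp
  then show ?thesis
    using telescoped by (simp add: algebra_simps)
qed

lemma alt_binomial_sum_closed_form:
  assumes "k \<le> n"
  shows "alt_binomial_sum n k
    = (1/2)^k * real (n choose k) * real (2 * n choose n) / real (2 * (n - k) choose (n - k))"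
  using assms
proof (induction k)
  case 0
  then show ?case
    by (simp add: alt_binomial_sum_def)
next
  case (Suc k)
  define q where "q = n - Suc k"
  have n_minus_k: "n - k = Suc q"
    using Suc.prems by (simp add: q_def)
  define r where "r = 2 * real q + 1"
  have r_pos: "r > 0"
    by (simp add: r_def)
  have central: "real (2 * Suc q choose Suc q) = 2 * r * real (2 * q choose q) / real (Suc q)"
    using arg_cong[OF central_binomial_Suc[of q], of real]
    by (simp add: r_def field_simps del: binomial_Suc_Suc)
  have absorb: "real (Suc k) * real (n choose Suc k) = real (Suc q) * real (n choose k)"
    using arg_cong[OF Suc_times_binomial_Suc[of k n], of real] by (simp add: n_minus_k algebra_simps)
  have "real (Suc k) * alt_binomial_sum n (Suc k) = r * alt_binomial_sum n k"
    using alt_binomial_sum_Suc[of k n] Suc.prems by (simp add: r_def q_def of_nat_diff)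
  also have "\<dots> = r * (1/2)^k * real (n choose k) * real (2 * n choose n)
      / real (2 * Suc q choose Suc q)"
    using Suc by (simp add: n_minus_k)
  also have "\<dots> = (1/2)^Suc k * (real (Suc q) * real (n choose k)) * real (2 * n choose n)
      / real (2 * q choose q)"
    using r_pos by (simp only: central) (simp add: field_simps)
  also have "\<dots> = real (Suc k) * ((1/2)^Suc k * real (n choose Suc k) * real (2 * n choose n)
      / real (2 * q choose q))"
    unfolding absorb[symmetric] by (simp add: field_simps)
  finally show ?case
    unfolding q_def[symmetric] by (metis mult_left_cancel of_nat_eq_0_iff nat.distinct(1))
qed

theorem lemma4:
  fixes m n :: nat
  assumes "m \<le> n"
  shows "(\<Sum>j=0..n-m. (-2::real) powi (- int j) * real ((n - m + j) choose j)
            * real ((2*n) choose (n + m + j)))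
         = 2 powi (int m - int n) * real (n choose m)
           * real ((2*n) choose n) / real ((2*m) choose m)"
proof -
  have "(-2::real) powi (- int j) = (-1/2)^j" for j
    by (simp add: power_int_minus flip: power_inverse)
  moreover have "(2 * n choose (n + m + j)) = (2 * n choose (n - m - j))" if "j \<le> n - m" for j
    using that assms binomial_symmetric[of "n + m + j" "2 * n"] by simp
  ultimately have "(\<Sum>j=0..n-m. (-2::real) powi (- int j) * real ((n - m + j) choose j)
            * real ((2*n) choose (n + m + j)))
      = alt_binomial_sum n (n - m)"
    unfolding alt_binomial_sum_def by (intro sum.cong) simp_all
  also have "\<dots> = (1/2)^(n - m) * real (n choose m) * real (2 * n choose n) / real (2 * m choose m)"
    using alt_binomial_sum_closed_form[of "n - m" n] assms binomial_symmetric[of m n] by simp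
  also have "(1/2::real)^(n - m) = 2 powi (int m - int n)"
  proof -
    have "(1/2::real)^(n - m) = 2 powi (- int (n - m))"
      by (simp add: power_int_minus inverse_eq_divide power_one_over)
    also have "- int (n - m) = int m - int n"
      using assms by simp
    finally show ?thesis .
  qed
  finally show ?thesis .
qed

end
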